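(* Let $g(x)=\sum_{k=0}^\infty a_k x^k$ be a real power series convergent for $x\in(-\varrho,\varrho)$, some $\varrho\in(0,\infty)$, put $G(y)=g(1/y)$, and let $c\in\mathbb{R}$. Then for every real $y$ with $y+c>1+\max\{1,1/\varrho\}$, $$(y+1)G(y+c)-yG(y+c-1)=a_0+\sum_{k=2}^\infty\frac{c\sum_{i=1}^{k-1}\binom{k-1}{i-1}a_i-\Bigl(\sum_{i=1}^{k-1}\binom{k}{i-1}a_i+\bigl(\binom{k}{k-1}-1\bigr)a_k\Bigr)}{(y+c)^k},$$ the series being convergent. Consequently $\lim_{y\to\infty}\bigl((y+1)G(y+c)-yG(y+c-1)\bigr)=a_0$. In particular, for every $c\in\mathbb{R}$, $$\lim_{n\to\infty}\Bigl((n+1)\Bigl(1+\frac1{n+c}\Bigr)^{n+c}-n\Bigl(1+\frac1{n+c-1}\Bigr)^{n+c-1}\Bigr)=\mathrm{e}.$$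
   Context: $\mathrm{e}$ is the base of the natural logarithm; the special case corresponds to $g(x)=(1+x)^{1/x}$ (with value $\mathrm{e}$ at $0$), whose Maclaurin series converges on $(-1,1)$ and has constant term $\mathrm{e}$, so that $G(y)=(1+1/y)^y$. *)

theory Defs
  imports Complex_Main
begin

definition pser :: "(nat \<Rightarrow> real) \<Rightarrow> real \<Rightarrow> real" where
  "pser a x = (\<Sum>k. a k * x ^ k)"

definition Gfun :: "(nat \<Rightarrow> real) \<Rightarrow> real \<Rightarrow> real" where
  "Gfun a y = pser a (1 / y)"

definition coefT :: "(nat \<Rightarrow> real) \<Rightarrow> real \<Rightarrow> nat \<Rightarrow> real" where
  "coefT a c k =
     c * (\<Sum>i=1..k-1. real ((k-1) choose (i-1)) * a i)
     - ((\<Sum>i=1..k-1. real (k choose (i-1)) * a i) + (real (k choose (k-1)) - 1) * a k)"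

end

theory Submission
  imports Defs "HOL-Analysis.Analysis" "HOL-Real_Asymp.Real_Asymp"
begin

text \<open>
  Put \<open>z = y + c\<close> and \<open>t = 1/z\<close>. Then \<open>G(z) = \<Sum> a\<^sub>n t\<^sup>n\<close>, and since
  \<open>1/(z - 1) = t/(1 - t)\<close>, expanding \<open>(t/(1 - t))\<^sup>k\<close> by the negative binomial series and
  summing the absolutely convergent double series along antidiagonals gives
  \<open>G(z - 1) = \<Sum> D\<^sub>n t\<^sup>n\<close> with \<open>D\<^sub>n = \<Sum>\<^sub>k (n-1 choose n-k) a\<^sub>k\<close>.
  Writing \<open>(y + 1) G(z) - y G(z - 1) = G(z) + c (G(z - 1) - G(z)) + z (G(z) - G(z - 1))\<close>,
  the factor \<open>z\<close> shifts the series \<open>G(z) - G(z - 1)\<close> down by one degree (its constant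
  term vanishes), and collecting coefficients gives \<open>a\<^sub>0\<close>, then \<open>0\<close> in degree one, then
  \<open>coefT\<close>. The remainder is \<open>1/z\<^sup>2\<close> times a power series in \<open>1/z\<close>, hence tends to
  \<open>0\<close>.
\<close>

lemma sums_negative_binomial:
  fixes t :: real
  assumes "\<bar>t\<bar> < 1"
  shows "(\<lambda>j. real ((k + j - 1) choose j) * t ^ j) sums (1 / (1 - t) ^ k)"
proof (cases "k = 0")
  case True
  have "(\<lambda>j. real ((k + j - 1) choose j) * t ^ j) = (\<lambda>j. if j = 0 then 1 else 0)"
    using True by (auto simp: fun_eq_iff binomial_eq_0)
  then show ?thesis using True sums_single[of 0 "\<lambda>_. 1::real"] by simp
next
  case False
  have "((- real k) gchoose j) * (-t) ^ j = real ((k + j - 1) choose j) * t ^ j" for j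
  proof -
    have "real k + real j - 1 = real (k + j - 1)" using False by auto
    then have "((- real k) gchoose j) * (-t) ^ j
        = ((-1) ^ j * (-1) ^ j) * (real ((k + j - 1) choose j) * t ^ j)"
      by (simp only: gbinomial_minus binomial_gbinomial power_minus[of t] mult_ac)
    also have "(-1::real) ^ j * (-1) ^ j = 1"
      by (simp flip: power_mult_distrib)
    finally show ?thesis by simp
  qed
  moreover have "(1 + -t) powr (- real k) = 1 / (1 - t) ^ k"
    using assms by (simp add: powr_minus powr_realpow divide_inverse)
  ultimately show ?thesis
    using gen_binomial_real[of "-t" "- real k"] assms by simp
qed

lemma has_sum_negative_binomial_row:
  fixes t \<alpha> :: real
  assumes "0 \<le> t" "t < 1"
  shows "((\<lambda>j. \<alpha> * real ((k + j - 1) choose j) * t ^ (k + j)) has_sum (\<alpha> * (t / (1 - t)) ^ k)) UNIV"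
proof -
  have "((\<lambda>j. real ((k + j - 1) choose j) * t ^ j) has_sum (1 / (1 - t) ^ k)) UNIV"
    by (rule sums_nonneg_imp_has_sum[OF sums_negative_binomial]) (use assms in auto)
  from has_sum_cmult_right[OF this, of "\<alpha> * t ^ k"] show ?thesis
    by (simp add: power_add power_divide mult_ac)
qed

text \<open>The coefficients of \<open>g(t/(1 - t))\<close> as a power series in \<open>t\<close>, i.e. of \<open>G(z - 1)\<close> in powers
  of \<open>1/z\<close>. For \<open>n = 0\<close> the truncated \<open>0 - 1 = 0\<close> makes the value \<open>a 0\<close>, as it should be.\<close>
definition shift_coeff :: "(nat \<Rightarrow> real) \<Rightarrow> nat \<Rightarrow> real" where
  "shift_coeff a n = (\<Sum>k\<le>n. a k * real ((n - 1) choose (n - k)))"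

lemma shift_coeff_sums:
  fixes t :: real and a :: "nat \<Rightarrow> real"
  assumes t: "0 \<le> t" "t < 1"
    and abs_summable: "summable (\<lambda>k. \<bar>a k\<bar> * (t / (1 - t)) ^ k)"
  shows "(\<lambda>n. shift_coeff a n * t ^ n) sums (\<Sum>k. a k * (t / (1 - t)) ^ k)"
proof -
  define F where "F = (\<lambda>(k, j). a k * real ((k + j - 1) choose j) * t ^ (k + j))"
  have rows: "((\<lambda>j. F (k, j)) has_sum (a k * (t / (1 - t)) ^ k)) UNIV" for k
    unfolding F_def using has_sum_negative_binomial_row[OF t] by simp
  have "(\<lambda>p. norm (F p)) summable_on Sigma UNIV (\<lambda>_. UNIV)"
  proof (rule summable_on_SigmaI)
    show "((\<lambda>j. norm (F (k, j))) has_sum (\<bar>a k\<bar> * (t / (1 - t)) ^ k)) UNIV" for k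
      using has_sum_negative_binomial_row[OF t, of "\<bar>a k\<bar>" k] t
      by (simp add: F_def abs_mult)
    show "(\<lambda>k. \<bar>a k\<bar> * (t / (1 - t)) ^ k) summable_on UNIV"
      using abs_summable t by (subst summable_on_UNIV_nonneg_real_iff) auto
  qed auto
  then have "F summable_on UNIV"
    by (simp add: abs_summable_summable)
  then obtain S where S: "(F has_sum S) UNIV"
    using has_sum_infsum by blast
  have "((\<lambda>k. a k * (t / (1 - t)) ^ k) has_sum S) UNIV"
    using has_sum_SigmaD[where f = F and A = UNIV and B = "\<lambda>_. UNIV"] S rows by auto
  then have S_eq: "S = (\<Sum>k. a k * (t / (1 - t)) ^ k)"
    using has_sum_imp_sums sums_unique by blast
  \<comment> \<open>Summing along the antidiagonals k + j = n collects the coefficient of t ^ n.\<close>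
  have "((\<lambda>(n, k). F (k, n - k)) has_sum S) (Sigma UNIV (\<lambda>n. {..n}))
      \<longleftrightarrow> (F has_sum S) UNIV"
    by (rule has_sum_reindex_bij_witness[where i = "\<lambda>(k, j). (k + j, k)"
        and j = "\<lambda>(n, k). (k, n - k)"]) auto
  with S have "((\<lambda>(n, k). F (k, n - k)) has_sum S) (Sigma UNIV (\<lambda>n. {..n}))"
    by simp
  then have "((\<lambda>n. \<Sum>k\<le>n. F (k, n - k)) has_sum S) UNIV"
    by (rule has_sum_SigmaD) auto
  moreover have "(\<Sum>k\<le>n. F (k, n - k)) = shift_coeff a n * t ^ n" for n
    by (simp add: F_def shift_coeff_def sum_distrib_right)
  ultimately show ?thesis
    using S_eq has_sum_imp_sums by fastforce
qed

lemma shift_coeff_eq: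
  assumes "n \<ge> 1"
  shows "shift_coeff a n = (\<Sum>i=1..n. real ((n - 1) choose (i - 1)) * a i)"
proof -
  have "shift_coeff a n = a 0 * real ((n - 1) choose n) + (\<Sum>k=1..n. a k * real ((n - 1) choose (n - k)))"
    unfolding shift_coeff_def by (simp add: atMost_atLeast0 sum.atLeast_Suc_atMost)
  also have "real ((n - 1) choose n) = 0"
    using assms by (simp add: binomial_eq_0)
  also have "(\<Sum>k=1..n. a k * real ((n - 1) choose (n - k))) = (\<Sum>i=1..n. real ((n - 1) choose (i - 1)) * a i)"
  proof (rule sum.cong)
    fix k assume "k \<in> {1..n}"
    then have "(n - 1) choose (n - k) = (n - 1) choose (k - 1)"
      using binomial_symmetric[of "k - 1" "n - 1"] by auto
    then show "a k * real ((n - 1) choose (n - k)) = real ((n - 1) choose (k - 1)) * a k"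
      by simp
  qed simp
  finally show ?thesis by simp
qed

lemma coefT_eq_shift_coeff:
  assumes "n \<ge> 2"
  shows "coefT a c n = a n + c * (shift_coeff a n - a n) + (a (Suc n) - shift_coeff a (Suc n))"
proof -
  obtain m where n: "n = Suc (Suc m)"
    using assms by (metis add_2_eq_Suc le_Suc_ex)
  define S1 where "S1 = (\<Sum>i=1..Suc m. real (Suc m choose (i - 1)) * a i)"
  define S2 where "S2 = (\<Sum>i=1..Suc m. real (n choose (i - 1)) * a i)"
  have "Suc (Suc m) choose Suc m = n"
    using binomial_symmetric[of "Suc m" "Suc (Suc m)"] n by simp
  then have coefT: "coefT a c n = c * S1 - (S2 + (real n - 1) * a n)"
    unfolding coefT_def S1_def S2_def n by simp
  have "shift_coeff a n = S1 + a n"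
    using shift_coeff_eq[of n a] unfolding S1_def n by (simp add: sum.cl_ivl_Suc)
  moreover have "shift_coeff a (Suc n) = S2 + real n * a n + a (Suc n)"
    using shift_coeff_eq[of "Suc n" a] unfolding S2_def n
    by (simp add: sum.cl_ivl_Suc \<open>Suc (Suc m) choose Suc m = n\<close>)
  ultimately show ?thesis
    unfolding coefT by (simp add: algebra_simps)
qed

lemma Gfun_sums:
  assumes conv: "\<And>x. \<bar>x\<bar> < \<rho> \<Longrightarrow> summable (\<lambda>k. a k * x ^ k)"
    and "\<bar>1 / z\<bar> < \<rho>"
  shows "(\<lambda>k. a k * (1 / z) ^ k) sums Gfun a z"
  using conv[OF assms(2)] by (simp add: Gfun_def pser_def summable_sums)

lemma Gfun_minus_one_sums:
  assumes rho_pos: "0 < \<rho>"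
    and conv: "\<And>x. \<bar>x\<bar> < \<rho> \<Longrightarrow> summable (\<lambda>k. a k * x ^ k)"
    and z: "1 < z" "1 / \<rho> < z - 1"
  shows "(\<lambda>n. shift_coeff a n * (1 / z) ^ n) sums Gfun a (z - 1)"
proof -
  define s where "s = 1 / (z - 1)"
  have s: "0 < s" "s < \<rho>"
    using z rho_pos by (auto simp: s_def field_simps)
  have "summable (\<lambda>k. a k * ((s + \<rho>) / 2) ^ k)"
    using s by (intro conv) auto
  then have "summable (\<lambda>k. norm (a k * s ^ k))"
    by (rule powser_insidea) (use s in auto)
  moreover have "1 / z / (1 - 1 / z) = s"
    using z by (simp add: s_def field_simps)
  ultimately have "(\<lambda>n. shift_coeff a n * (1 / z) ^ n) sums (\<Sum>k. a k * s ^ k)"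
    using shift_coeff_sums[of "1 / z" a] z s by (simp add: abs_mult)
  then show ?thesis
    by (simp add: Gfun_def pser_def s_def)
qed

lemma difference_sums:
  assumes rho_pos: "0 < \<rho>"
    and conv: "\<And>x. \<bar>x\<bar> < \<rho> \<Longrightarrow> summable (\<lambda>k. a k * x ^ k)"
    and z: "1 < y + c" "1 / \<rho> < y + c - 1"
  shows "(\<lambda>k. coefT a c (k + 2) / (y + c) ^ (k + 2)) sums
           ((y + 1) * Gfun a (y + c) - y * Gfun a (y + c - 1) - a 0)"
proof -
  define z where "z = y + c"
  define t where "t = 1 / z"
  define D where "D = shift_coeff a"
  define E where "E n = a n + c * (D n - a n) + (a (Suc n) - D (Suc n))" for n
  have "1 / z < \<rho>"
    using z rho_pos by (simp add: z_def field_simps)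
  then have A: "(\<lambda>n. a n * t ^ n) sums Gfun a z"
    using Gfun_sums[OF conv] z by (simp add: t_def z_def)
  have B: "(\<lambda>n. D n * t ^ n) sums Gfun a (z - 1)"
    using Gfun_minus_one_sums[OF rho_pos conv] z by (simp add: D_def t_def z_def)
  have "(\<lambda>n. (a n - D n) * t ^ n) sums (Gfun a z - Gfun a (z - 1))"
    using sums_diff[OF A B] by (simp add: algebra_simps)
  moreover have "D 0 = a 0"
    by (simp add: D_def shift_coeff_def)
  ultimately have "(\<lambda>n. (a (Suc n) - D (Suc n)) * t ^ Suc n) sums (Gfun a z - Gfun a (z - 1))"
    by (subst sums_Suc_iff) simp
  then have "(\<lambda>n. z * ((a (Suc n) - D (Suc n)) * t ^ Suc n)) sums (z * (Gfun a z - Gfun a (z - 1)))"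
    by (rule sums_mult)
  moreover have shift: "z * (x * t ^ Suc n) = x * t ^ n" for x n
  proof -
    have "z * (x * t ^ Suc n) = x * t ^ n * (z * t)"
      by (simp add: algebra_simps)
    then show ?thesis
      using z by (simp add: t_def z_def)
  qed
  ultimately have "(\<lambda>n. (a (Suc n) - D (Suc n)) * t ^ n) sums (z * (Gfun a z - Gfun a (z - 1)))"
    by (simp only: shift)
  then have "(\<lambda>n. a n * t ^ n + c * ((D n - a n) * t ^ n) + (a (Suc n) - D (Suc n)) * t ^ n) sums
      (Gfun a z + c * (Gfun a (z - 1) - Gfun a z) + z * (Gfun a z - Gfun a (z - 1)))"
    using sums_diff[OF B A] by (intro sums_add sums_mult A) (simp_all add: algebra_simps)
  then have "(\<lambda>n. E n * t ^ n) sums ((y + 1) * Gfun a z - y * Gfun a (z - 1))"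
    by (simp add: E_def z_def algebra_simps)
  from sums_split_initial_segment[OF this, of 2]
  have "(\<lambda>n. E (n + 2) * t ^ (n + 2)) sums ((y + 1) * Gfun a z - y * Gfun a (z - 1) - a 0)"
    by (simp add: E_def D_def shift_coeff_def numeral_2_eq_2 atMost_Suc)
  moreover have "E (n + 2) * t ^ (n + 2) = coefT a c (n + 2) / z ^ (n + 2)" for n
    using coefT_eq_shift_coeff[of "n + 2" a c] by (simp add: E_def D_def t_def power_one_over)
  ultimately show ?thesis
    by (simp add: z_def)
qed

lemma tendsto_suminf_inverse_powers_at_top:
  fixes b :: "nat \<Rightarrow> real"
  assumes "0 < z\<^sub>0" and "summable (\<lambda>k. b k / z\<^sub>0 ^ k)"
  shows "((\<lambda>z. \<Sum>k. b k / z ^ k) \<longlongrightarrow> b 0) at_top"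
proof -
  have "isCont (\<lambda>x. \<Sum>k. b k * x ^ k) 0"
    by (rule isCont_powser[where K = "1 / z\<^sub>0"]) (use assms in \<open>simp_all add: power_one_over\<close>)
  moreover have "((\<lambda>z::real. 1 / z) \<longlongrightarrow> 0) at_top"
    by real_asymp
  ultimately have "((\<lambda>z. \<Sum>k. b k * (1 / z) ^ k) \<longlongrightarrow> (\<Sum>k. b k * 0 ^ k)) at_top"
    by (rule isCont_tendsto_compose)
  then show ?thesis
    by (simp add: power_one_over)
qed

lemma difference_tendsto:
  assumes rho_pos: "0 < \<rho>"
    and conv: "\<And>x. \<bar>x\<bar> < \<rho> \<Longrightarrow> summable (\<lambda>k. a k * x ^ k)"
  shows "((\<lambda>y. (y + 1) * Gfun a (y + c) - y * Gfun a (y + c - 1)) \<longlongrightarrow> a 0) at_top"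
proof -
  define B where "B = 2 + 1 / \<rho>"
  define b where "b k = (if k < 2 then 0 else coefT a c k)" for k
  have sums: "(\<lambda>k. b k / (y + c) ^ k) sums ((y + 1) * Gfun a (y + c) - y * Gfun a (y + c - 1) - a 0)"
    if "B < y + c" for y
  proof -
    have "0 < 1 / \<rho>"
      using rho_pos by simp
    then have z: "1 < y + c" "1 / \<rho> < y + c - 1"
      using that unfolding B_def by linarith+
    have "(\<lambda>k. coefT a c (k + 2) / (y + c) ^ (k + 2)) sums
        ((y + 1) * Gfun a (y + c) - y * Gfun a (y + c - 1) - a 0)"
      using rho_pos conv z by (rule difference_sums[where \<rho> = \<rho>])
    then have "(\<lambda>k. b (k + 2) / (y + c) ^ (k + 2)) sums
        ((y + 1) * Gfun a (y + c) - y * Gfun a (y + c - 1) - a 0)"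
      by (simp add: b_def)
    then show ?thesis
      by (subst (asm) sums_zero_iff_shift) (simp_all add: b_def)
  qed
  have "0 < B"
    using rho_pos unfolding B_def by (simp add: add_pos_pos)
  moreover have "summable (\<lambda>k. b k / (B + 1) ^ k)"
    using sums[of "B + 1 - c"] by (simp add: sums_summable)
  ultimately have "((\<lambda>z. \<Sum>k. b k / z ^ k) \<longlongrightarrow> 0) at_top"
    using tendsto_suminf_inverse_powers_at_top[of "B + 1" b] by (simp add: b_def)
  moreover have "filterlim (\<lambda>y. y + c) at_top at_top"
    by real_asymp
  ultimately have "((\<lambda>y. a 0 + (\<Sum>k. b k / (y + c) ^ k)) \<longlongrightarrow> a 0 + 0) at_top"
    by (intro tendsto_add tendsto_const) (rule filterlim_compose)
  moreover have "eventually (\<lambda>y. a 0 + (\<Sum>k. b k / (y + c) ^ k) =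
      (y + 1) * Gfun a (y + c) - y * Gfun a (y + c - 1)) at_top"
    using eventually_gt_at_top[of "B - c"]
  proof eventually_elim
    case (elim y)
    then show ?case
      using sums_unique[OF sums[of y]] by simp
  qed
  ultimately show ?thesis
    by (simp add: tendsto_cong)
qed

theorem mainTheorem5:
  fixes a :: "nat \<Rightarrow> real" and \<rho> c :: real
  assumes rho_pos: "0 < \<rho>"
    and conv: "\<And>x. \<bar>x\<bar> < \<rho> \<Longrightarrow> summable (\<lambda>k. a k * x ^ k)"
  shows "(\<forall>y::real. y + c > 1 + max 1 (1 / \<rho>) \<longrightarrow>
            summable (\<lambda>k. coefT a c (k + 2) / (y + c) ^ (k + 2)) \<and>
            (y + 1) * Gfun a (y + c) - y * Gfun a (y + c - 1)
              = a 0 + (\<Sum>k. coefT a c (k + 2) / (y + c) ^ (k + 2)))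
      \<and> ((\<lambda>y. (y + 1) * Gfun a (y + c) - y * Gfun a (y + c - 1)) \<longlongrightarrow> a 0) at_top
      \<and> (\<lambda>n::nat. (real n + 1) * (1 + 1 / (real n + c)) powr (real n + c)
             - real n * (1 + 1 / (real n + c - 1)) powr (real n + c - 1))
          \<longlonglongrightarrow> exp 1"
proof (intro conjI allI impI)
  fix y :: real
  assume "y + c > 1 + max 1 (1 / \<rho>)"
  then have "1 < y + c" "1 / \<rho> < y + c - 1"
    by auto
  with rho_pos conv have series: "(\<lambda>k. coefT a c (k + 2) / (y + c) ^ (k + 2)) sums
      ((y + 1) * Gfun a (y + c) - y * Gfun a (y + c - 1) - a 0)"
    by (rule difference_sums[where \<rho> = \<rho>])
  then show "summable (\<lambda>k. coefT a c (k + 2) / (y + c) ^ (k + 2))"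
    by (rule sums_summable)
  show "(y + 1) * Gfun a (y + c) - y * Gfun a (y + c - 1)
      = a 0 + (\<Sum>k. coefT a c (k + 2) / (y + c) ^ (k + 2))"
    using series by (simp add: sums_iff)
next
  show "((\<lambda>y. (y + 1) * Gfun a (y + c) - y * Gfun a (y + c - 1)) \<longlongrightarrow> a 0) at_top"
    using rho_pos conv by (rule difference_tendsto[where \<rho> = \<rho>])
next
  show "(\<lambda>n::nat. (real n + 1) * (1 + 1 / (real n + c)) powr (real n + c)
      - real n * (1 + 1 / (real n + c - 1)) powr (real n + c - 1)) \<longlonglongrightarrow> exp 1"
    by real_asymp
qed

end
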